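(* Let $\gamma:=\prod_{j=1}^\infty(1-2^{-j})$. For every integer $a\ge 1$ there is a sequence of examples, indexed by $m\to\infty$, each consisting of integers $n$ and a set $U\subseteq\mathbb{F}_2^n\setminus\{0\}$ of $|U|=2^m$ distinct nonzero vectors, such that for a uniformly random linear map $B:\mathbb{F}_2^n\to\mathbb{F}_2^m$, \[ \liminf_{m\to\infty}\Pr\left[|\{u\in U: Bu=0\}|>2^a-2\right]\ge\gamma^{-1}2^{-a^2}(1-2^{-a})^2. \]
   Context: A uniformly random linear map $\mathbb{F}_2^n\to\mathbb{F}_2^m$ is one chosen uniformly among all linear maps. *)

theory Defs
  imports "HOL-Analysis.Analysis"
begin

text \<open>Vectors of F_2^n are encoded as functions nat => bool vanishing outside {..<n}
  (True = 1). A linear map F_2^n -> F_2^m is encoded by its m x n matrix over F_2,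
  a function nat => nat => bool vanishing outside {..<m} x {..<n}; this is a bijection
  between linear maps and such matrices, so a uniform linear map is a uniform matrix.\<close>

definition f2vecs :: "nat \<Rightarrow> (nat \<Rightarrow> bool) set" where
  "f2vecs n = {v. \<forall>j\<ge>n. \<not> v j}"

definition f2zero :: "nat \<Rightarrow> bool" where
  "f2zero = (\<lambda>_. False)"

definition f2mats :: "nat \<Rightarrow> nat \<Rightarrow> (nat \<Rightarrow> nat \<Rightarrow> bool) set" where
  "f2mats m n = {B. \<forall>i j. (m \<le> i \<or> n \<le> j) \<longrightarrow> \<not> B i j}"

definition f2apply :: "nat \<Rightarrow> (nat \<Rightarrow> nat \<Rightarrow> bool) \<Rightarrow> (nat \<Rightarrow> bool) \<Rightarrow> (nat \<Rightarrow> bool)" where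
  "f2apply n B u = (\<lambda>i. odd (card {j. j < n \<and> B i j \<and> u j}))"

definition f2prob :: "nat \<Rightarrow> nat \<Rightarrow> ((nat \<Rightarrow> nat \<Rightarrow> bool) \<Rightarrow> bool) \<Rightarrow> real" where
  "f2prob m n P = real (card {B \<in> f2mats m n. P B}) / real (card (f2mats m n))"

definition gamma_const :: real where
  "gamma_const = (\<Prod>j. 1 - (1/2::real) ^ Suc j)"

end

theory Submission
  imports Defs
begin

text \<open>Take \<open>n = m + 1\<close> and let \<open>U\<close> consist of the nonzero vectors of \<open>F_2^m\<close> together with
  \<open>e_(m+1)\<close>. If the first \<open>m\<close> columns of \<open>B\<close> have rank \<open>m - a\<close>, their kernel in \<open>F_2^m\<close> has
  \<open>2^a\<close> elements, so \<open>B\<close> kills at least \<open>2^a - 1\<close> vectors of \<open>U\<close>. Adding one column at a time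
  shows that exactly \<open>N_k(r) N_m(r) / N_r(r)\<close> of the \<open>m x k\<close> matrices over \<open>F_2\<close> have rank \<open>r\<close>,
  where \<open>N_k(r) = prod_(i<r) (2^k - 2^i)\<close>. For \<open>k = m\<close> and \<open>r = m - a\<close> their proportion is
  \<open>2^(-a^2) (2^(-a-1); 1/2)_r^2 / (1/2; 1/2)_r \<ge> 2^(-a^2) (1 - 2^(-a))^2 / (1/2; 1/2)_r\<close>, and
  \<open>(1/2; 1/2)_r \<longrightarrow> gamma\<close>.\<close>

definition f2add :: "(nat \<Rightarrow> bool) \<Rightarrow> (nat \<Rightarrow> bool) \<Rightarrow> (nat \<Rightarrow> bool)" where
  "f2add u v = (\<lambda>j. u j \<noteq> v j)"

lemma f2add_self [simp]: "f2add u u = f2zero"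
  by (simp add: f2add_def f2zero_def)

lemma f2add_zero [simp]: "f2add u f2zero = u"
  by (auto simp: f2add_def f2zero_def)

lemma f2add_cancel_left [simp]: "f2add u (f2add u v) = v"
  by (auto simp: f2add_def)

lemma f2add_cancel_right [simp]: "f2add (f2add u v) v = u"
  by (auto simp: f2add_def)

lemma inj_f2add: "inj (f2add u)"
  by (metis injI f2add_cancel_left)

lemma f2add_f2vecs: "u \<in> f2vecs n \<Longrightarrow> v \<in> f2vecs n \<Longrightarrow> f2add u v \<in> f2vecs n"
  by (simp add: f2add_def f2vecs_def)

lemma f2zero_in_f2vecs [simp]: "f2zero \<in> f2vecs n"
  by (simp add: f2vecs_def f2zero_def)

lemma f2vecs_eq_image_Pow: "f2vecs n = (\<lambda>S j. j \<in> S) ` Pow {..<n}"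
proof
  show "f2vecs n \<subseteq> (\<lambda>S j. j \<in> S) ` Pow {..<n}"
  proof
    fix v assume "v \<in> f2vecs n"
    then have "{j. v j} \<in> Pow {..<n}" "v = (\<lambda>j. j \<in> {j. v j})"
      by (auto simp: f2vecs_def not_le[symmetric])
    then show "v \<in> (\<lambda>S j. j \<in> S) ` Pow {..<n}" by blast
  qed
qed (auto simp: f2vecs_def)

lemma finite_f2vecs [simp]: "finite (f2vecs n)"
  by (simp add: f2vecs_eq_image_Pow)

lemma card_f2vecs: "card (f2vecs n) = 2 ^ n"
proof -
  have "inj_on (\<lambda>S j. j \<in> S) (Pow {..<n})"
    by (rule inj_onI) (metis Collect_mem_eq)
  then show ?thesis
    by (simp add: f2vecs_eq_image_Pow card_image card_Pow)
qed

lemma f2mats_eq_image_Pow: "f2mats m k = (\<lambda>S i j. (i, j) \<in> S) ` Pow ({..<m} \<times> {..<k})"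
proof
  show "f2mats m k \<subseteq> (\<lambda>S i j. (i, j) \<in> S) ` Pow ({..<m} \<times> {..<k})"
  proof
    fix B assume "B \<in> f2mats m k"
    then have "{(i, j). B i j} \<in> Pow ({..<m} \<times> {..<k})" "B = (\<lambda>i j. (i, j) \<in> {(i, j). B i j})"
      by (auto simp: f2mats_def not_le[symmetric])
    then show "B \<in> (\<lambda>S i j. (i, j) \<in> S) ` Pow ({..<m} \<times> {..<k})" by blast
  qed
qed (auto simp: f2mats_def)

lemma finite_f2mats [simp]: "finite (f2mats m k)"
  by (simp add: f2mats_eq_image_Pow)

lemma card_f2mats: "card (f2mats m k) = 2 ^ (m * k)"
proof -
  have "inj_on (\<lambda>S i j. (i, j) \<in> S) (Pow ({..<m} \<times> {..<k}))"
  proof (rule inj_onI)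
    fix S T :: "(nat \<times> nat) set"
    assume "(\<lambda>i j. (i, j) \<in> S) = (\<lambda>i j. (i, j) \<in> T)"
    then have "(i, j) \<in> S \<longleftrightarrow> (i, j) \<in> T" for i j by metis
    then show "S = T" by auto
  qed
  then show ?thesis
    by (simp add: f2mats_eq_image_Pow card_image card_Pow card_cartesian_product)
qed

lemma f2apply_0: "f2apply 0 B u = f2zero"
  by (simp add: f2apply_def f2zero_def)

lemma f2apply_Suc: "f2apply (Suc k) B u = (\<lambda>i. f2apply k B u i \<noteq> (B i k \<and> u k))"
proof
  fix i
  have "{j. j < Suc k \<and> B i j \<and> u j} =
      {j. j < k \<and> B i j \<and> u j} \<union> (if B i k \<and> u k then {k} else {})"
    by (auto simp: less_Suc_eq)
  then show "f2apply (Suc k) B u i = (f2apply k B u i \<noteq> (B i k \<and> u k))"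
    unfolding f2apply_def by auto
qed

lemma f2apply_f2add: "f2apply n B (f2add u v) = f2add (f2apply n B u) (f2apply n B v)"
  by (induction n) (auto simp: f2apply_0 f2apply_Suc f2add_def)

lemma f2apply_f2zero [simp]: "f2apply n B f2zero = f2zero"
  by (metis f2apply_f2add f2add_self)

lemma f2apply_cong:
  "(\<And>i j. j < k \<Longrightarrow> B i j = B' i j) \<Longrightarrow> (\<And>j. j < k \<Longrightarrow> u j = u' j) \<Longrightarrow>
    f2apply k B u = f2apply k B' u'"
  unfolding f2apply_def by (intro ext arg_cong[where f = "\<lambda>S. odd (card S)"]) auto

definition take_cols :: "nat \<Rightarrow> (nat \<Rightarrow> nat \<Rightarrow> bool) \<Rightarrow> (nat \<Rightarrow> nat \<Rightarrow> bool)" where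
  "take_cols k B = (\<lambda>i j. j < k \<and> B i j)"

definition col :: "nat \<Rightarrow> (nat \<Rightarrow> nat \<Rightarrow> bool) \<Rightarrow> (nat \<Rightarrow> bool)" where
  "col k B = (\<lambda>i. B i k)"

definition set_col :: "nat \<Rightarrow> (nat \<Rightarrow> bool) \<Rightarrow> (nat \<Rightarrow> nat \<Rightarrow> bool) \<Rightarrow> (nat \<Rightarrow> nat \<Rightarrow> bool)" where
  "set_col k c B = (\<lambda>i j. if j = k then c i else B i j)"

lemma take_cols_set_col: "B \<in> f2mats m k \<Longrightarrow> take_cols k (set_col k c B) = B"
  by (auto simp: set_col_def take_cols_def f2mats_def fun_eq_iff) (meson leI)

lemma col_set_col [simp]: "col k (set_col k c B) = c"
  by (simp add: col_def set_col_def)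

lemma set_col_take_cols: "B \<in> f2mats m (Suc k) \<Longrightarrow> set_col k (col k B) (take_cols k B) = B"
  by (auto simp: set_col_def take_cols_def col_def f2mats_def fun_eq_iff) (metis less_SucE leI)

lemma set_col_in_f2mats: "B \<in> f2mats m k \<Longrightarrow> c \<in> f2vecs m \<Longrightarrow> set_col k c B \<in> f2mats m (Suc k)"
  by (auto simp: set_col_def f2mats_def f2vecs_def)

lemma card_f2mats_Suc_by_column:
  "card {B \<in> f2mats m (Suc k). P (take_cols k B) (col k B)} =
    (\<Sum>B \<in> f2mats m k. card {c \<in> f2vecs m. P B c})"
proof -
  let ?f = "\<lambda>(B, c). set_col k c B"
  let ?S = "SIGMA B:f2mats m k. {c \<in> f2vecs m. P B c}"
  have "{B \<in> f2mats m (Suc k). P (take_cols k B) (col k B)} = ?f ` ?S"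
  proof (intro equalityI subsetI)
    fix B assume B: "B \<in> {B \<in> f2mats m (Suc k). P (take_cols k B) (col k B)}"
    then have "B = ?f (take_cols k B, col k B)"
      using set_col_take_cols[of B m k] by simp
    moreover have "(take_cols k B, col k B) \<in> ?S"
      using B by (auto simp: take_cols_def col_def f2mats_def f2vecs_def)
    ultimately show "B \<in> ?f ` ?S" by (rule image_eqI)
  next
    fix B assume "B \<in> ?f ` ?S"
    then show "B \<in> {B \<in> f2mats m (Suc k). P (take_cols k B) (col k B)}"
      by (auto simp: take_cols_set_col set_col_in_f2mats)
  qed
  moreover have "inj_on ?f ?S"
    by (rule inj_on_inverseI[where g = "\<lambda>B. (take_cols k B, col k B)"])
      (auto simp: take_cols_set_col)
  ultimately show ?thesis
    by (simp add: card_image card_SigmaI)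
qed

lemma f2vecs_Suc: "f2vecs (Suc k) = f2vecs k \<union> (\<lambda>u. u(k := True)) ` f2vecs k"
proof (intro equalityI subsetI)
  fix v assume v: "v \<in> f2vecs (Suc k)"
  show "v \<in> f2vecs k \<union> (\<lambda>u. u(k := True)) ` f2vecs k"
  proof (cases "v k")
    case True
    then have "v = (v(k := False))(k := True)"
      by (auto simp: fun_eq_iff)
    moreover have "v(k := False) \<in> f2vecs k"
      using v by (auto simp: f2vecs_def le_Suc_eq)
    ultimately show ?thesis
      by (intro UnI2 image_eqI)
  next
    case False
    then have "v \<in> f2vecs k"
      using v by (auto simp: f2vecs_def Suc_le_eq dest: le_neq_implies_less)
    then show ?thesis ..
  qed
qed (auto simp: f2vecs_def)

lemma f2apply_Suc_f2vecs: "u \<in> f2vecs k \<Longrightarrow> f2apply (Suc k) B u = f2apply k B u"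
  by (simp add: f2apply_Suc f2vecs_def)

lemma f2apply_Suc_upd:
  assumes "u \<in> f2vecs k"
  shows "f2apply (Suc k) B (u(k := True)) = f2add (col k B) (f2apply k B u)"
proof -
  have "f2apply k B (u(k := True)) = f2apply k B u"
    by (rule f2apply_cong) auto
  then show ?thesis
    by (auto simp: f2apply_Suc f2add_def col_def)
qed

section \<open>Counting matrices by rank\<close>

definition f2range :: "nat \<Rightarrow> (nat \<Rightarrow> nat \<Rightarrow> bool) \<Rightarrow> (nat \<Rightarrow> bool) set" where
  "f2range k B = f2apply k B ` f2vecs k"

definition f2add_closed :: "(nat \<Rightarrow> bool) set \<Rightarrow> bool" where
  "f2add_closed S \<longleftrightarrow> (\<forall>x \<in> S. \<forall>y \<in> S. f2add x y \<in> S)"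

lemma finite_f2range [simp]: "finite (f2range k B)"
  by (simp add: f2range_def)

lemma f2range_0: "f2range 0 B = {f2zero}"
  by (auto simp: f2range_def f2apply_0 intro: f2zero_in_f2vecs)

lemma f2range_take_cols: "f2range k (take_cols k B) = f2range k B"
  unfolding f2range_def by (intro image_cong refl f2apply_cong) (auto simp: take_cols_def)

lemma f2add_closed_f2range: "f2add_closed (f2range k B)"
  unfolding f2add_closed_def f2range_def
proof (clarify)
  fix u v assume "u \<in> f2vecs k" "v \<in> f2vecs k"
  then show "f2add (f2apply k B u) (f2apply k B v) \<in> f2apply k B ` f2vecs k"
    by (metis f2apply_f2add f2add_f2vecs imageI)
qed

lemma f2apply_in_f2vecs: "B \<in> f2mats m k \<Longrightarrow> f2apply k B u \<in> f2vecs m"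
  unfolding f2vecs_def f2apply_def f2mats_def by simp

lemma f2range_subset: "B \<in> f2mats m k \<Longrightarrow> f2range k B \<subseteq> f2vecs m"
  by (auto simp: f2range_def f2apply_in_f2vecs)

lemma f2range_Suc: "f2range (Suc k) B = f2range k B \<union> f2add (col k B) ` f2range k B"
  unfolding f2range_def f2vecs_Suc image_Un image_image
  by (simp add: f2apply_Suc_f2vecs f2apply_Suc_upd cong: image_cong)

lemma Un_f2add_image_mem: "f2add_closed S \<Longrightarrow> c \<in> S \<Longrightarrow> S \<union> f2add c ` S = S"
  by (auto simp: f2add_closed_def)

lemma card_Un_f2add_image_notin:
  assumes "f2add_closed S" "c \<notin> S" "finite S"
  shows "card (S \<union> f2add c ` S) = 2 * card S"
proof -
  have "S \<inter> f2add c ` S = {}"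
    using assms(1,2) unfolding f2add_closed_def by (metis disjoint_iff f2add_cancel_right imageE)
  moreover have "card (f2add c ` S) = card S"
    by (rule card_image) (rule inj_on_subset[OF inj_f2add subset_UNIV])
  ultimately show ?thesis
    using assms(3) by (simp add: card_Un_disjoint)
qed

lemma card_f2vecs_extending:
  assumes "f2add_closed S" "S \<subseteq> f2vecs m"
  shows "card {c \<in> f2vecs m. card (S \<union> f2add c ` S) = N} =
    (if card S = N then card S else 0) + (if 2 * card S = N then 2 ^ m - card S else 0)"
proof -
  have fin: "finite S"
    using assms(2) finite_f2vecs by (rule finite_subset)
  have "card (S \<union> f2add c ` S) = (if c \<in> S then card S else 2 * card S)" for c
    using assms(1) fin by (simp add: Un_f2add_image_mem card_Un_f2add_image_notin)
  then have "{c \<in> f2vecs m. card (S \<union> f2add c ` S) = N} =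
      {c \<in> S. card S = N} \<union> {c \<in> f2vecs m - S. 2 * card S = N}"
    using assms(2) by auto
  also have "card \<dots> = card {c \<in> S. card S = N} + card {c \<in> f2vecs m - S. 2 * card S = N}"
    by (rule card_Un_disjoint) (auto simp: fin)
  also have "\<dots> = (if card S = N then card S else 0) + (if 2 * card S = N then 2 ^ m - card S else 0)"
    using card_Diff_subset[OF fin assms(2)] by (simp add: card_f2vecs del: Diff_iff)
  finally show ?thesis .
qed

definition rank_count :: "nat \<Rightarrow> nat \<Rightarrow> nat \<Rightarrow> nat" where
  "rank_count m k r = card {B \<in> f2mats m k. card (f2range k B) = 2 ^ r}"

lemma rank_count_0: "rank_count m 0 r = (if r = 0 then 1 else 0)"
proof -
  have "f2mats m 0 = {\<lambda>i j. False}"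
    by (auto simp: f2mats_def)
  then show ?thesis
    by (simp add: rank_count_def f2range_0 Collect_conv_if eq_commute[of "Suc 0"])
qed

lemma rank_count_Suc_sum:
  "rank_count m (Suc k) r =
    (\<Sum>B \<in> f2mats m k. (if card (f2range k B) = 2 ^ r then 2 ^ r else 0) +
      (if 2 * card (f2range k B) = 2 ^ r then 2 ^ m - card (f2range k B) else 0))"
  (is "_ = ?rhs")
proof -
  have "rank_count m (Suc k) r = card {B \<in> f2mats m (Suc k).
      card (f2range k (take_cols k B) \<union> f2add (col k B) ` f2range k (take_cols k B)) = 2 ^ r}"
    by (simp add: rank_count_def f2range_Suc f2range_take_cols)
  also have "\<dots> = (\<Sum>B \<in> f2mats m k. card {c \<in> f2vecs m. card (f2range k B \<union> f2add c ` f2range k B) = 2 ^ r})"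
    by (rule card_f2mats_Suc_by_column)
  also have "\<dots> = ?rhs"
    by (intro sum.cong refl)
      (auto simp: card_f2vecs_extending f2add_closed_f2range f2range_subset)
  finally show ?thesis .
qed

lemma sum_if_const: "finite A \<Longrightarrow> (\<Sum>x \<in> A. if P x then c else 0) = card {x \<in> A. P x} * c"
  by (simp add: sum.inter_filter[symmetric])

lemma rank_count_Suc_0: "rank_count m (Suc k) 0 = rank_count m k 0"
proof -
  have "rank_count m (Suc k) 0 = (\<Sum>B \<in> f2mats m k. if card (f2range k B) = 1 then 1 else 0)"
    unfolding rank_count_Suc_sum by (intro sum.cong refl) auto
  also have "\<dots> = rank_count m k 0"
    by (simp add: sum_if_const rank_count_def)
  finally show ?thesis .
qed

lemma rank_count_Suc_Suc:
  "rank_count m (Suc k) (Suc s) = rank_count m k (Suc s) * 2 ^ Suc s + rank_count m k s * (2 ^ m - 2 ^ s)"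
proof -
  have "rank_count m (Suc k) (Suc s) =
      (\<Sum>B \<in> f2mats m k. (if card (f2range k B) = 2 ^ Suc s then 2 ^ Suc s else 0) +
        (if card (f2range k B) = 2 ^ s then 2 ^ m - 2 ^ s else 0))"
    unfolding rank_count_Suc_sum by (intro sum.cong refl) auto
  also have "\<dots> = rank_count m k (Suc s) * 2 ^ Suc s + rank_count m k s * (2 ^ m - 2 ^ s)"
    by (simp only: sum.distrib sum_if_const finite_f2mats rank_count_def)
  finally show ?thesis .
qed

text \<open>The number of linearly independent \<open>r\<close>-tuples in \<open>F_2^k\<close>.\<close>

definition indep_count :: "nat \<Rightarrow> nat \<Rightarrow> real" where
  "indep_count k r = (\<Prod>i<r. 2 ^ k - 2 ^ i)"

lemma indep_count_0 [simp]: "indep_count k 0 = 1"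
  by (simp add: indep_count_def)

lemma indep_count_Suc: "indep_count k (Suc s) = indep_count k s * (2 ^ k - 2 ^ s)"
  by (simp add: indep_count_def)

lemma indep_count_Suc_Suc: "indep_count (Suc k) (Suc s) = (2 ^ Suc k - 1) * 2 ^ s * indep_count k s"
proof -
  have "indep_count (Suc k) (Suc s) = (2 ^ Suc k - 2 ^ 0) * (\<Prod>i<s. 2 ^ Suc k - 2 ^ Suc i)"
    unfolding indep_count_def by (rule prod.lessThan_Suc_shift)
  also have "(\<Prod>i<s. (2::real) ^ Suc k - 2 ^ Suc i) = (\<Prod>i<s. 2 * (2 ^ k - 2 ^ i))"
    by (simp add: right_diff_distrib)
  also have "\<dots> = 2 ^ s * indep_count k s"
    unfolding prod.distrib indep_count_def by simp
  finally show ?thesis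
    by simp
qed

lemma indep_count_diag_pos: "indep_count r r > 0"
  unfolding indep_count_def by (rule prod_pos) simp

lemma indep_count_eq_0: "k < r \<Longrightarrow> indep_count k r = 0"
  unfolding indep_count_def by (rule prod_zero) auto

lemma rank_count_formula: "real (rank_count m k r) = indep_count k r * indep_count m r / indep_count r r"
proof (induction k arbitrary: r)
  case 0
  then show ?case
    by (cases r) (auto simp: rank_count_0 indep_count_eq_0)
next
  case (Suc k)
  show ?case
  proof (cases r)
    case 0
    then show ?thesis
      using Suc.IH[of 0] by (simp add: rank_count_Suc_0)
  next
    case r: (Suc s)
    have "real (rank_count m (Suc k) r) =
        real (rank_count m k r) * 2 ^ r + real (rank_count m k s) * (2 ^ m - 2 ^ s)"
      \<comment> \<open>for \<open>s > m\<close> the subtraction \<open>2^m - 2^s\<close> truncates in \<open>nat\<close>, but then both terms vanish\<close>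
    proof (cases "s \<le> m")
      case True
      then show ?thesis
        by (simp add: r rank_count_Suc_Suc of_nat_diff)
    next
      case False
      then have "rank_count m k s = 0"
        using Suc.IH[of s] by (simp add: indep_count_eq_0)
      then show ?thesis
        by (simp add: r rank_count_Suc_Suc)
    qed
    also have "\<dots> = indep_count (Suc k) r * indep_count m r / indep_count r r"
    proof -
      have n1: "indep_count (Suc k) (Suc s) = (2 ^ Suc k - 1) * 2 ^ s * indep_count k s"
        and n2: "indep_count (Suc s) (Suc s) = (2 ^ Suc s - 1) * 2 ^ s * indep_count s s"
        by (rule indep_count_Suc_Suc)+
      have n3: "indep_count k (Suc s) = indep_count k s * (2 ^ k - 2 ^ s)"
        and n4: "indep_count m (Suc s) = indep_count m s * (2 ^ m - 2 ^ s)"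
        by (rule indep_count_Suc)+
      have "(0::real) < 2 ^ Suc s - 1"
        using one_less_power[of "2::real" "Suc s"] by linarith
      then show ?thesis
        using indep_count_diag_pos[of s] unfolding Suc.IH r n1 n2 n3 n4 by (simp add: field_simps)
    qed
    finally show ?thesis .
  qed
qed

lemma card_f2mats_Suc_rank: "card {B \<in> f2mats m (Suc k). card (f2range k B) = 2 ^ r} = rank_count m k r * 2 ^ m"
proof -
  have "card {B \<in> f2mats m (Suc k). card (f2range k B) = 2 ^ r} =
      card {B \<in> f2mats m (Suc k). card (f2range k (take_cols k B)) = 2 ^ r}"
    by (simp add: f2range_take_cols)
  also have "\<dots> = (\<Sum>B \<in> f2mats m k. card {c \<in> f2vecs m. card (f2range k B) = 2 ^ r})"
    by (rule card_f2mats_Suc_by_column[where P = "\<lambda>B c. card (f2range k B) = 2 ^ r"])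
  also have "\<dots> = (\<Sum>B \<in> f2mats m k. if card (f2range k B) = 2 ^ r then 2 ^ m else 0)"
    by (intro sum.cong refl) (simp add: card_f2vecs)
  also have "\<dots> = rank_count m k r * 2 ^ m"
    by (simp add: sum_if_const rank_count_def)
  finally show ?thesis .
qed

section \<open>The kernel and the example\<close>

definition f2kernel :: "nat \<Rightarrow> (nat \<Rightarrow> nat \<Rightarrow> bool) \<Rightarrow> (nat \<Rightarrow> bool) set" where
  "f2kernel n B = {u \<in> f2vecs n. f2apply n B u = f2zero}"

lemma rank_nullity_f2: "card (f2kernel n B) * card (f2range n B) = 2 ^ n"
proof -
  let ?fibre = "\<lambda>y. {u \<in> f2vecs n. f2apply n B u = y}"
  have card_fibre: "card (?fibre y) = card (f2kernel n B)" if y: "y \<in> f2range n B" for y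
  proof -
    obtain u0 where u0: "u0 \<in> f2vecs n" "f2apply n B u0 = y"
      using y by (auto simp: f2range_def)
    have "?fibre y = f2add u0 ` f2kernel n B"
    proof (intro equalityI subsetI)
      fix u assume "u \<in> ?fibre y"
      then have "f2add u0 u \<in> f2kernel n B" and "u = f2add u0 (f2add u0 u)"
        using u0 by (simp_all add: f2kernel_def f2apply_f2add f2add_f2vecs)
      then show "u \<in> f2add u0 ` f2kernel n B" by blast
    qed (use u0 in \<open>auto simp: f2kernel_def f2apply_f2add f2add_f2vecs\<close>)
    then show ?thesis
      by (simp add: card_image inj_on_subset[OF inj_f2add])
  qed
  have "f2vecs n = (\<Union>y \<in> f2range n B. ?fibre y)"
    by (auto simp: f2range_def)
  then have "2 ^ n = card (\<Union>y \<in> f2range n B. ?fibre y)"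
    by (simp add: card_f2vecs)
  also have "\<dots> = (\<Sum>y \<in> f2range n B. card (?fibre y))"
    by (rule card_UN_disjoint) auto
  also have "\<dots> = card (f2kernel n B) * card (f2range n B)"
    by (simp add: card_fibre)
  finally show ?thesis ..
qed

text \<open>The vector \<open>e_(m+1)\<close> only pads \<open>U\<close> to \<open>2^m\<close> elements.\<close>

definition example_vecs :: "nat \<Rightarrow> (nat \<Rightarrow> bool) set" where
  "example_vecs m = (f2vecs m - {f2zero}) \<union> {\<lambda>j. j = m}"

lemma example_vecs_subset: "example_vecs m \<subseteq> f2vecs (Suc m) - {f2zero}"
  by (auto simp: example_vecs_def f2vecs_def f2zero_def fun_eq_iff)

lemma finite_example_vecs: "finite (example_vecs m)"
  by (simp add: example_vecs_def)

lemma card_example_vecs: "card (example_vecs m) = 2 ^ m"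
proof -
  have "(\<lambda>j. j = m) \<notin> f2vecs m"
    by (simp add: f2vecs_def)
  moreover have "card (f2vecs m - {f2zero}) = 2 ^ m - 1"
    by (simp add: card_f2vecs)
  ultimately show ?thesis
    by (simp add: example_vecs_def)
qed

lemma f2kernel_subset_example_vecs:
  "f2kernel m B - {f2zero} \<subseteq> {u \<in> example_vecs m. f2apply (Suc m) B u = f2zero}"
  by (auto simp: f2kernel_def example_vecs_def f2apply_Suc_f2vecs)

lemma card_f2kernel_if_rank:
  assumes "a \<le> m" "card (f2range m B) = 2 ^ (m - a)"
  shows "card (f2kernel m B) = 2 ^ a"
proof -
  have "card (f2kernel m B) * 2 ^ (m - a) = 2 ^ a * 2 ^ (m - a)"
    using rank_nullity_f2[of m B] assms by (simp add: power_add[symmetric])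
  then show ?thesis
    by simp
qed

lemma example_event_if_rank:
  assumes "1 \<le> a" "a \<le> m" "card (f2range m B) = 2 ^ (m - a)"
  shows "2 ^ a - 2 < card {u \<in> example_vecs m. f2apply (Suc m) B u = f2zero}"
proof -
  have "2 ^ a - 1 = card (f2kernel m B - {f2zero})"
    using card_f2kernel_if_rank[OF assms(2,3)] by (simp add: f2kernel_def)
  also have "\<dots> \<le> card {u \<in> example_vecs m. f2apply (Suc m) B u = f2zero}"
    by (intro card_mono f2kernel_subset_example_vecs) (simp add: finite_example_vecs)
  finally have "2 ^ a - 1 \<le> card {u \<in> example_vecs m. f2apply (Suc m) B u = f2zero}" .
  moreover have "(2::nat) \<le> 2 ^ a"
    using power_increasing[OF assms(1), of "2::nat"] by simp
  ultimately show ?thesis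
    by linarith
qed

lemma f2prob_example_ge_rank_count:
  assumes "1 \<le> a" "a \<le> m"
  shows "real (rank_count m m (m - a)) / 2 ^ (m * m) \<le>
    f2prob m (Suc m) (\<lambda>B. 2 ^ a - 2 < card {u \<in> example_vecs m. f2apply (Suc m) B u = f2zero})"
proof -
  let ?E = "{B \<in> f2mats m (Suc m). 2 ^ a - 2 < card {u \<in> example_vecs m. f2apply (Suc m) B u = f2zero}}"
  have "rank_count m m (m - a) * 2 ^ m = card {B \<in> f2mats m (Suc m). card (f2range m B) = 2 ^ (m - a)}"
    by (simp add: card_f2mats_Suc_rank)
  also have "\<dots> \<le> card ?E"
    by (intro card_mono) (auto intro: example_event_if_rank[OF assms])
  finally have "real (rank_count m m (m - a) * 2 ^ m) \<le> real (card ?E)"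
    by (simp only: of_nat_le_iff)
  then show ?thesis
    by (simp add: f2prob_def card_f2mats power_add field_simps)
qed

section \<open>Asymptotics\<close>

definition half_qpoch :: "nat \<Rightarrow> nat \<Rightarrow> real" where
  "half_qpoch a r = (\<Prod>j<r. 1 - (1/2) ^ (a + 1 + j))"

lemma half_qpoch_pos: "0 < half_qpoch a r"
  unfolding half_qpoch_def
proof (intro prod_pos)
  fix j
  show "0 < 1 - (1/2::real) ^ (a + 1 + j)"
    using power_Suc_less_one[of "1/2::real" "a + j"] by simp
qed

lemma half_qpoch_ge: "1 - (1/2) ^ a \<le> half_qpoch a r"
proof -
  have "(\<Sum>j<r. (1/2::real) ^ (a + 1 + j)) = (1/2) ^ (a + 1) * (\<Sum>j<r. (1/2) ^ j)"
    by (rule sum_power_add)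
  also have "\<dots> \<le> (1/2) ^ (a + 1) * 2"
    using geometric_sum_less[of "1/2::real" "{..<r}"] by (intro mult_left_mono) auto
  also have "\<dots> = (1/2) ^ a"
    by simp
  finally have "1 - (1/2) ^ a \<le> 1 - (\<Sum>j<r. (1/2::real) ^ (a + 1 + j))"
    by linarith
  also have "\<dots> \<le> half_qpoch a r"
  proof -
    have "(1/2::real) ^ n \<in> {0..1}" for n
      by (simp add: power_le_one)
    then show ?thesis
      unfolding half_qpoch_def by (intro Weierstrass_prod_ineq)
  qed
  finally show ?thesis .
qed

lemma indep_count_half_qpoch: "indep_count (a + r) r = 2 ^ ((a + r) * r) * half_qpoch a r"
proof -
  have "indep_count (a + r) r = (\<Prod>i<r. 2 ^ (a + r) - 2 ^ (r - Suc i))"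
    unfolding indep_count_def by (rule prod.nat_diff_reindex[symmetric])
  also have "\<dots> = (\<Prod>i<r. 2 ^ (a + r) * (1 - (1/2) ^ (a + 1 + i)))"
  proof (rule prod.cong)
    fix i assume "i \<in> {..<r}"
    then have "r - Suc i + (a + 1 + i) = a + r"
      by simp
    then have "(2::real) ^ (r - Suc i) * 2 ^ (a + 1 + i) = 2 ^ (a + r)"
      by (metis power_add)
    then show "(2::real) ^ (a + r) - 2 ^ (r - Suc i) = 2 ^ (a + r) * (1 - (1/2) ^ (a + 1 + i))"
      by (simp add: field_simps power_one_over)
  qed simp
  also have "\<dots> = 2 ^ ((a + r) * r) * half_qpoch a r"
    by (simp add: prod.distrib half_qpoch_def power_mult)
  finally show ?thesis .
qed

lemma rank_count_square_ge:
  "(1/2) ^ (a * a) * (1 - (1/2) ^ a) ^ 2 / half_qpoch 0 r \<le>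
    real (rank_count (a + r) (a + r) r) / 2 ^ ((a + r) * (a + r))"
proof -
  have "((a + r) * r) * 2 + a * a = r * r + (a + r) * (a + r)"
    by (simp add: algebra_simps)
  then have exps: "((2::real) ^ ((a + r) * r)) ^ 2 = (1/2) ^ (a * a) * (2 ^ (r * r) * 2 ^ ((a + r) * (a + r)))"
    by (simp add: power_mult [symmetric] power_add [symmetric] power_one_over field_simps
        flip: power_mult_distrib)
  have "real (rank_count (a + r) (a + r) r) / 2 ^ ((a + r) * (a + r)) =
      (2 ^ ((a + r) * r)) ^ 2 * half_qpoch a r ^ 2 /
        (2 ^ (r * r) * 2 ^ ((a + r) * (a + r)) * half_qpoch 0 r)"
    using indep_count_half_qpoch[of 0 r]
    by (simp add: rank_count_formula indep_count_half_qpoch power2_eq_square mult_ac)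
  also have "\<dots> = (1/2) ^ (a * a) * half_qpoch a r ^ 2 / half_qpoch 0 r"
    unfolding exps by simp
  finally have "real (rank_count (a + r) (a + r) r) / 2 ^ ((a + r) * (a + r)) =
      (1/2) ^ (a * a) * half_qpoch a r ^ 2 / half_qpoch 0 r" .
  moreover have "(1 - (1/2) ^ a) ^ 2 \<le> half_qpoch a r ^ 2"
    using half_qpoch_ge by (intro power_mono) (simp_all add: power_le_one)
  ultimately show ?thesis
    using half_qpoch_pos[of 0 r] by (simp add: divide_right_mono)
qed

lemma convergent_prod_gamma: "convergent_prod (\<lambda>j. 1 - (1/2::real) ^ Suc j)"
  by (intro abs_convergent_prod_imp_convergent_prod)
    (simp add: abs_convergent_prod_conv_summable summable_geometric summable_mult)

lemma half_qpoch_0_tendsto: "half_qpoch 0 \<longlonglongrightarrow> gamma_const"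
proof -
  have "(\<lambda>r. \<Prod>j\<le>r. 1 - (1/2::real) ^ Suc j) \<longlonglongrightarrow> gamma_const"
    unfolding gamma_const_def using convergent_prod_gamma by (rule convergent_prod_LIMSEQ)
  moreover have "half_qpoch 0 = (\<lambda>r. \<Prod>j<r. 1 - (1/2::real) ^ Suc j)"
    by (simp add: half_qpoch_def fun_eq_iff)
  ultimately show ?thesis
    by (simp only: LIMSEQ_lessThan_iff_atMost)
qed

lemma gamma_const_nonzero: "gamma_const \<noteq> 0"
  unfolding gamma_const_def
proof (rule prodinf_nonzero[OF convergent_prod_gamma])
  fix j
  show "1 - (1/2::real) ^ Suc j \<noteq> 0"
    using power_Suc_less_one[of "1/2::real" j] by simp
qed

lemma powr_minus_half_pow: "2 powr (- real n) = (1/2::real) ^ n"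
  by (simp add: powr_minus powr_realpow power_one_over inverse_eq_divide)

lemma powr_bound_eq_half_pow:
  "inverse g * 2 powr (- ((real a)^2)) * (1 - 2 powr (- real a))^2 =
    (1/2::real) ^ (a * a) * (1 - (1/2) ^ a) ^ 2 / g"
proof -
  have sq: "(real a)^2 = real (a * a)"
    by (simp add: power2_eq_square)
  show ?thesis
    unfolding sq powr_minus_half_pow by (simp add: field_simps)
qed

lemma f2prob_example_ge_half_qpoch:
  assumes "1 \<le> a" "a \<le> m"
  shows "(1/2) ^ (a * a) * (1 - (1/2) ^ a) ^ 2 / half_qpoch 0 (m - a) \<le>
    f2prob m (Suc m) (\<lambda>B. 2 ^ a - 2 < card {u \<in> example_vecs m. f2apply (Suc m) B u = f2zero})"
proof -
  obtain r where "m = a + r"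
    using assms(2) le_Suc_ex by blast
  then show ?thesis
    using rank_count_square_ge[of a r] f2prob_example_ge_rank_count[OF assms] by simp
qed

lemma liminf_ge_if_eventually_ge:
  assumes "f \<longlonglongrightarrow> l" "\<forall>\<^sub>F m in sequentially. f m \<le> g m"
  shows "ereal l \<le> liminf (\<lambda>m. ereal (g m))"
proof -
  have "liminf (\<lambda>m. ereal (f m)) = ereal l"
    using assms(1) by (intro lim_imp_Liminf tendsto_ereal) simp_all
  moreover have "\<forall>\<^sub>F m in sequentially. ereal (f m) \<le> ereal (g m)"
    using assms(2) by simp
  ultimately show ?thesis
    by (metis Liminf_mono)
qed

theorem proposition2p4:
  fixes a :: nat
  assumes "a \<ge> 1"
  shows "\<exists>(n :: nat \<Rightarrow> nat) (U :: nat \<Rightarrow> (nat \<Rightarrow> bool) set).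
     (\<forall>m. U m \<subseteq> f2vecs (n m) - {f2zero} \<and> finite (U m) \<and> card (U m) = 2 ^ m) \<and>
     liminf (\<lambda>m. ereal (f2prob m (n m)
        (\<lambda>B. card {u \<in> U m. f2apply (n m) B u = f2zero} > 2 ^ a - 2)))
       \<ge> ereal (inverse gamma_const * 2 powr (- ((real a)^2)) * (1 - 2 powr (- real a))^2)"
proof (intro exI conjI allI)
  define c where "c = (1/2::real) ^ (a * a) * (1 - (1/2) ^ a) ^ 2"
  have "(\<lambda>m. half_qpoch 0 (m - a)) \<longlonglongrightarrow> gamma_const"
    by (rule LIMSEQ_offset[where k = a]) (simp add: half_qpoch_0_tendsto)
  then have "(\<lambda>m. c / half_qpoch 0 (m - a)) \<longlonglongrightarrow> c / gamma_const"
    using gamma_const_nonzero by (intro tendsto_divide tendsto_const)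
  moreover have "\<forall>\<^sub>F m in sequentially. c / half_qpoch 0 (m - a) \<le>
      f2prob m (Suc m) (\<lambda>B. card {u \<in> example_vecs m. f2apply (Suc m) B u = f2zero} > 2 ^ a - 2)"
    using f2prob_example_ge_half_qpoch[OF assms] unfolding c_def eventually_sequentially by blast
  ultimately show "liminf (\<lambda>m. ereal (f2prob m (Suc m)
        (\<lambda>B. card {u \<in> example_vecs m. f2apply (Suc m) B u = f2zero} > 2 ^ a - 2)))
      \<ge> ereal (inverse gamma_const * 2 powr (- ((real a)^2)) * (1 - 2 powr (- real a))^2)"
    unfolding powr_bound_eq_half_pow c_def[symmetric] by (rule liminf_ge_if_eventually_ge)
qed (simp_all add: example_vecs_subset finite_example_vecs card_example_vecs)

end
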